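(* Let $e\ge4$, let $a_2,\dots,a_{e-1}$ be integers, and let $\triangle_{2,e-1}$ be a sparse coloured triangle with associated numbers $\alpha_\varepsilon,k_\varepsilon$ ($2\le\varepsilon\le e-1$). Define Laurent monomials $p_{\delta,\varepsilon}\in\mathbb Z[z_2^{\pm1},\dots,z_{e-1}^{\pm1}]$ for $2\le\delta\le\varepsilon\le e-1$ recursively in $\varepsilon-\delta$ by $p_{\varepsilon,\varepsilon}=z_\varepsilon^{a_\varepsilon}$ and, for $\delta<\varepsilon$, $$p_{\delta,\varepsilon}=\frac{p_{\delta,\varepsilon-1}\,p_{\delta+1,\varepsilon}}{z_\delta z_\varepsilon}\ \text{ if the dot }(\delta,\varepsilon)\text{ of the extended triangle is black},\qquad p_{\delta,\varepsilon}=\frac{p_{\delta,\varepsilon-1}\,p_{\delta+1,\varepsilon}}{p_{\delta+1,\varepsilon-1}}\ \text{ otherwise}$$ (the dots $(\delta,\delta+1)$ being always black). Then $$p_{2,e-1}=\prod_{\beta=2}^{e-1}\bigl(z_\beta^{\,a_\beta-k_\beta}\bigr)^{\alpha_\beta}.$$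
   Context: Dots are pairs of integers $(\alpha,\beta)$. The triangle $\triangle_{\delta,\varepsilon}$ is the set of dots $(\alpha,\beta)$ with $\delta\le\alpha$, $\beta\le\varepsilon$, $\beta-\alpha\ge2$; sub-triangles $\triangle_{\alpha,\beta}$ are defined by the same rule. A coloured triangle $\triangle_{\delta,\varepsilon}$ is sparse if for every dot $(\alpha,\beta)\in\triangle_{\delta,\varepsilon}$ (including the vertex) the number of black dots in $\triangle_{\alpha,\beta}$ is at most $\beta-\alpha-1$, with equality iff $(\alpha,\beta)$ is black. The extended triangle $\underline\triangle_{2,e-1}$ consists of $\triangle_{2,e-1}$ together with the base-line dots $(\varepsilon-1,\varepsilon)$, $3\le\varepsilon\le e-1$, which are all coloured black. The line $l_\varepsilon$ is the set of dots having $\varepsilon$ as a coordinate. Weights: for a black dot $(\delta,\varepsilon)$ of $\triangle_{2,e-1}$, $w_{\delta,\varepsilon}=1+\sum w_{\alpha,\beta}$, the sum over black dots $(\alpha,\beta)$ of $\triangle_{2,e-1}$ with $\alpha<\delta$ and $\beta>\varepsilon$ (this defines the weights recursively from the top). For $2\le\varepsilon\le e-1$, $\alpha_\varepsilon=1+\sum w_{\alpha,\beta}$, the sum over black dots with $\alpha<\varepsilon<\beta$ (so $\alpha_2=\alpha_{e-1}=1$). Let $n_\varepsilon$ be the number of black dots on $l_\varepsilon$ in the extended triangle $\underline\triangle_{2,e-1}$; then $k_\varepsilon=n_\varepsilon$ if $\alpha_\varepsilon=1$ and $k_\varepsilon=n_\varepsilon-1$ otherwise. *)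

theory Defs
  imports Main
begin

text \<open>Dots are pairs of naturals (all dots occurring have coordinates between 2 and e-1).
  A colouring of the triangle is given by its set of black dots.\<close>

definition tri :: "nat \<Rightarrow> nat \<Rightarrow> (nat \<times> nat) set" where
  "tri d e = {(a, b). d \<le> a \<and> b \<le> e \<and> a + 2 \<le> b}"

definition sparse :: "nat \<Rightarrow> nat \<Rightarrow> (nat \<times> nat) set \<Rightarrow> bool" where
  "sparse d e B \<longleftrightarrow> B \<subseteq> tri d e \<and>
     (\<forall>(a, b) \<in> tri d e.
        card (B \<inter> tri a b) \<le> b - a - 1 \<and>
        (card (B \<inter> tri a b) = b - a - 1 \<longleftrightarrow> (a, b) \<in> B))"

definition ext_black :: "nat \<Rightarrow> (nat \<times> nat) set \<Rightarrow> (nat \<times> nat) set" where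
  "ext_black e B = B \<union> {(eps - 1, eps) | eps. 3 \<le> eps \<and> eps \<le> e - 1}"

function wt :: "nat \<Rightarrow> (nat \<times> nat) set \<Rightarrow> nat \<Rightarrow> nat \<Rightarrow> nat" where
  "wt e B d eps = 1 + (\<Sum>p \<in> {p \<in> B \<inter> tri 2 (e - 1). fst p < d \<and> snd p > eps}.
                          wt e B (fst p) (snd p))"
  by pat_completeness auto
termination
  by (relation "measure (\<lambda>(e, B, d, eps). d)") auto

definition alph :: "nat \<Rightarrow> (nat \<times> nat) set \<Rightarrow> nat \<Rightarrow> nat" where
  "alph e B eps = 1 + (\<Sum>p \<in> {p \<in> B \<inter> tri 2 (e - 1). fst p < eps \<and> eps < snd p}.
                          wt e B (fst p) (snd p))"

definition nline :: "nat \<Rightarrow> (nat \<times> nat) set \<Rightarrow> nat \<Rightarrow> nat" where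
  "nline e B eps = card {p \<in> ext_black e B. fst p = eps \<or> snd p = eps}"

definition kk :: "nat \<Rightarrow> (nat \<times> nat) set \<Rightarrow> nat \<Rightarrow> nat" where
  "kk e B eps = (if alph e B eps = 1 then nline e B eps else nline e B eps - 1)"

text \<open>Monic Laurent monomials in z_2, ..., z_(e-1) are represented by their exponent
  vectors (nat \<Rightarrow> int); multiplication of monomials is addition of exponent vectors
  and division is subtraction. \<open>zpow i m\<close> is z_i^m.\<close>
definition zpow :: "nat \<Rightarrow> int \<Rightarrow> (nat \<Rightarrow> int)" where
  "zpow i m = (\<lambda>j. if j = i then m else 0)"

function pm :: "nat \<Rightarrow> (nat \<times> nat) set \<Rightarrow> (nat \<Rightarrow> int) \<Rightarrow> nat \<Rightarrow> nat \<Rightarrow> (nat \<Rightarrow> int)" where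
  "pm e B a d eps =
     (if eps \<le> d then zpow eps (a eps)
      else if (d, eps) \<in> ext_black e B \<or> eps = d + 1 then
        (\<lambda>j. pm e B a d (eps - 1) j + pm e B a (d + 1) eps j - zpow d 1 j - zpow eps 1 j)
      else
        (\<lambda>j. pm e B a d (eps - 1) j + pm e B a (d + 1) eps j - pm e B a (d + 1) (eps - 1) j))"
  by pat_completeness auto
termination
  by (relation "measure (\<lambda>(e, B, a, d, eps). eps - d)") auto

end

theory Submission imports Defs begin

(* The theorem is proved through a closed formula for every Laurent monomial p_{d,e}, valid
   on every sub-triangle and for an arbitrary colouring, which is then evaluated on the full
   triangle using sparseness.

   (1) For the sub-triangle with vertex (d,e) we introduce relative weights w^{d,e}, defined
       by the recursion of the weights but using only the black dots of that sub-triangle.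
       They satisfy an inclusion-exclusion rule: passing from the sub-triangles (d,e-1),
       (d+1,e) and (d+1,e-1) to (d,e) only adds the corner dot (d,e).
   (2) The exponent of z_j in p_{d,e} equals a_j w^{d,e}(j,j) minus the sum of w^{d,e}(D)
       over the black dots D of the extended sub-triangle having j as a coordinate; by (1)
       this expression obeys the recursion defining p_{d,e}.
   (3) In a sparse triangle black dots never cross and every black dot (u,v) has an apex i
       with (u,i) and (i,v) black.  Hence the weights on the line l_j add up to
       k_j alpha_j, and w^{2,e-1}(j,j) = alpha_j; with (2) this gives the theorem. *)

declare wt.simps [simp del] pm.simps [simp del]

definition box :: "nat \<Rightarrow> nat \<Rightarrow> (nat \<times> nat) set" where
  "box d e = {(a, b). d \<le> a \<and> b \<le> e}"

lemma tri_box: "tri d e = {(a, b). a + 2 \<le> b} \<inter> box d e"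
  unfolding tri_def box_def by auto

lemma finite_ordered_box:
  assumes "\<And>a b. (a, b) \<in> A \<Longrightarrow> a \<le> b"
  shows "finite (A \<inter> box d e)"
proof (rule finite_subset)
  show "A \<inter> box d e \<subseteq> {..e} \<times> {..e}"
    using assms unfolding box_def by fastforce
qed simp

lemma finite_tri [simp]: "finite (tri d e)"
  unfolding tri_box by (rule finite_ordered_box) auto

lemma finite_Int_tri [simp]: "finite (A \<inter> tri d e)"
  by (rule finite_Int) simp

lemma tri_short: "y < x + 2 \<Longrightarrow> tri x y = {}"
  unfolding tri_def by auto

lemma box_corner:
  "d < e \<Longrightarrow> A \<inter> box d e - (A \<inter> box d (e - 1) \<union> A \<inter> box (d + 1) e) = A \<inter> {(d, e)}"
  unfolding box_def by auto

lemma sum_split_subset: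
  assumes "finite E" "E' \<subseteq> E" "\<And>p. p \<in> E - E' \<Longrightarrow> g p = h p"
  shows "sum g E = sum g E' + sum h (E - E')"
proof -
  have "sum g E = sum g (E - E') + sum g E'" by (rule sum.subset_diff[OF assms(2,1)])
  moreover have "sum g (E - E') = sum h (E - E')" by (rule sum.cong[OF refl assms(3)])
  ultimately show ?thesis by (simp add: add.commute)
qed

lemma sum_box_incl_excl:
  fixes g1 g2 g3 h :: "nat \<times> nat \<Rightarrow> 'b::ab_group_add"
  assumes de: "d < e" and ordered: "\<And>a b. (a, b) \<in> A \<Longrightarrow> a \<le> b"
    and g1: "\<And>p. p \<in> A \<inter> box d e - box d (e - 1) \<Longrightarrow> g1 p = h p"
    and g2: "\<And>p. p \<in> A \<inter> box d e - box (d + 1) e \<Longrightarrow> g2 p = h p"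
    and g3: "\<And>p. p \<in> A \<inter> box d e - box (d + 1) (e - 1) \<Longrightarrow> g3 p = h p"
  shows "sum g1 (A \<inter> box d e) + sum g2 (A \<inter> box d e) - sum g3 (A \<inter> box d e)
       = sum g1 (A \<inter> box d (e - 1)) + sum g2 (A \<inter> box (d + 1) e)
         - sum g3 (A \<inter> box (d + 1) (e - 1)) + (if (d, e) \<in> A then h (d, e) else 0)"
proof -
  define E where "E = A \<inter> box d e"
  define E1 where "E1 = A \<inter> box d (e - 1)"
  define E2 where "E2 = A \<inter> box (d + 1) e"
  have fin: "finite E" unfolding E_def using ordered by (rule finite_ordered_box)
  have E1: "E1 \<subseteq> E" and E2: "E2 \<subseteq> E" unfolding E_def E1_def E2_def box_def by auto
  have E12: "E1 \<inter> E2 = A \<inter> box (d + 1) (e - 1)" unfolding E1_def E2_def box_def by auto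
  have s1: "sum g1 E = sum g1 E1 + sum h (E - E1)"
    by (rule sum_split_subset[OF fin E1]) (use g1 in \<open>auto simp: E_def E1_def\<close>)
  have s2: "sum g2 E = sum g2 E2 + sum h (E - E2)"
    by (rule sum_split_subset[OF fin E2]) (use g2 in \<open>auto simp: E_def E2_def\<close>)
  have s3: "sum g3 E = sum g3 (E1 \<inter> E2) + sum h (E - E1 \<inter> E2)"
    by (rule sum_split_subset[OF fin]) (use g3 E1 in \<open>auto simp: E12 E_def box_def\<close>)
  have "sum h (E - E1 \<inter> E2) + sum h (E - (E1 \<union> E2)) = sum h (E - E1) + sum h (E - E2)"
    using sum.union_inter[of "E - E1" "E - E2" h] fin by (simp add: Diff_Int Diff_Un)
  moreover have "sum h (E - (E1 \<union> E2)) = (if (d, e) \<in> A then h (d, e) else 0)"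
    using box_corner[OF de, of A] unfolding E_def E1_def E2_def by simp
  ultimately show ?thesis
    using s1 s2 s3 unfolding E12[symmetric] E_def[symmetric] E1_def[symmetric] E2_def[symmetric]
    by (simp add: algebra_simps)
qed

function subwt :: "(nat \<times> nat) set \<Rightarrow> nat \<Rightarrow> nat \<Rightarrow> nat \<Rightarrow> nat \<Rightarrow> nat" where
  "subwt B d e x y =
     1 + (\<Sum>p \<in> {p \<in> B \<inter> tri d e. fst p < x \<and> snd p > y}. subwt B d e (fst p) (snd p))"
  by pat_completeness auto
termination
  by (relation "measure (\<lambda>(B, d, e, x, y). x)") auto

declare subwt.simps [simp del]

lemma subwt_trivial: "x \<le> d \<or> e \<le> y \<Longrightarrow> subwt B d e x y = 1"
proof -
  assume "x \<le> d \<or> e \<le> y"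
  then have none: "{p \<in> B \<inter> tri d e. fst p < x \<and> snd p > y} = {}" by (auto simp: tri_def)
  show ?thesis by (subst subwt.simps, subst none) simp
qed

lemma subwt_boundary:
  shows "p \<in> box d e - box d (e - 1) \<Longrightarrow> int (subwt B d (e - 1) (fst p) (snd p)) = 1"
    and "p \<in> box d e - box (d + 1) e \<Longrightarrow> int (subwt B (d + 1) e (fst p) (snd p)) = 1"
    and "p \<in> box d e - box (d + 1) (e - 1) \<Longrightarrow>
      int (subwt B (d + 1) (e - 1) (fst p) (snd p)) = 1"
proof -
  assume "p \<in> box d e - box d (e - 1)"
  then have "e - 1 \<le> snd p" by (auto simp: box_def)
  then show "int (subwt B d (e - 1) (fst p) (snd p)) = 1" by (simp add: subwt_trivial)
next
  assume "p \<in> box d e - box (d + 1) e"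
  then have "fst p \<le> d + 1" by (auto simp: box_def)
  then show "int (subwt B (d + 1) e (fst p) (snd p)) = 1" by (simp add: subwt_trivial)
next
  assume "p \<in> box d e - box (d + 1) (e - 1)"
  then have "fst p \<le> d + 1 \<or> e - 1 \<le> snd p" by (auto simp: box_def)
  then show "int (subwt B (d + 1) (e - 1) (fst p) (snd p)) = 1" by (auto simp: subwt_trivial)
qed

(* The bookkeeping behind both inclusion-exclusion rules below: if a weight w0 on the box
   (d,e) decomposes pointwise into the weights of the three smaller boxes, plus one more copy
   of w3 strictly inside when the corner is black, then so do the c-weighted sums, up to the
   coefficient of the corner itself. *)
lemma sum_weights_recursion:
  fixes w0 w1 w2 w3 c :: "nat \<times> nat \<Rightarrow> int"
  assumes de: "d < e" and ordered: "\<And>a b. (a, b) \<in> A \<Longrightarrow> a \<le> b"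
    and rec: "\<And>p. p \<in> A \<inter> box d e \<Longrightarrow>
      w0 p = w1 p + w2 p - w3 p + (if corner \<and> d < fst p \<and> snd p < e then w3 p else 0)"
    and w1: "\<And>p. p \<in> box d e - box d (e - 1) \<Longrightarrow> w1 p = 1"
    and w2: "\<And>p. p \<in> box d e - box (d + 1) e \<Longrightarrow> w2 p = 1"
    and w3: "\<And>p. p \<in> box d e - box (d + 1) (e - 1) \<Longrightarrow> w3 p = 1"
  shows "(\<Sum>p \<in> A \<inter> box d e. w0 p * c p) =
      (\<Sum>p \<in> A \<inter> box d (e - 1). w1 p * c p) + (\<Sum>p \<in> A \<inter> box (d + 1) e. w2 p * c p)
      - (\<Sum>p \<in> A \<inter> box (d + 1) (e - 1). w3 p * c p)
      + (if corner then (\<Sum>p \<in> A \<inter> box (d + 1) (e - 1). w3 p * c p) else 0)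
      + (if (d, e) \<in> A then c (d, e) else 0)"
proof -
  let ?E = "A \<inter> box d e"
  have inner: "{p \<in> ?E. d < fst p \<and> snd p < e} = A \<inter> box (d + 1) (e - 1)"
    using de unfolding box_def by auto
  have "(\<Sum>p \<in> ?E. w0 p * c p) = (\<Sum>p \<in> ?E. w1 p * c p) + (\<Sum>p \<in> ?E. w2 p * c p)
      - (\<Sum>p \<in> ?E. w3 p * c p) + (\<Sum>p \<in> ?E. if corner \<and> d < fst p \<and> snd p < e then w3 p * c p else 0)"
  proof -
    have "w0 p * c p = w1 p * c p + w2 p * c p - w3 p * c p
        + (if corner \<and> d < fst p \<and> snd p < e then w3 p * c p else 0)" if "p \<in> ?E" for p
      by (cases "corner \<and> d < fst p \<and> snd p < e") (auto simp: rec[OF that] algebra_simps)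
    then show ?thesis by (simp add: sum.distrib sum_subtractf)
  qed
  also have "(\<Sum>p \<in> ?E. if corner \<and> d < fst p \<and> snd p < e then w3 p * c p else 0)
      = (if corner then (\<Sum>p \<in> A \<inter> box (d + 1) (e - 1). w3 p * c p) else 0)"
  proof -
    have "(\<Sum>p \<in> ?E. if d < fst p \<and> snd p < e then w3 p * c p else 0)
        = (\<Sum>p \<in> {p \<in> ?E. d < fst p \<and> snd p < e}. w3 p * c p)"
      by (rule sum.inter_filter[symmetric]) (rule finite_ordered_box[OF ordered])
    then show ?thesis unfolding inner by simp
  qed
  also have "(\<Sum>p \<in> ?E. w1 p * c p) + (\<Sum>p \<in> ?E. w2 p * c p) - (\<Sum>p \<in> ?E. w3 p * c p) =
      (\<Sum>p \<in> A \<inter> box d (e - 1). w1 p * c p) + (\<Sum>p \<in> A \<inter> box (d + 1) e. w2 p * c p)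
      - (\<Sum>p \<in> A \<inter> box (d + 1) (e - 1). w3 p * c p) + (if (d, e) \<in> A then c (d, e) else 0)"
    by (rule sum_box_incl_excl[OF de ordered]) (simp_all add: w1 w2 w3)
  finally show ?thesis by simp
qed

(* Inclusion-exclusion for relative weights: a dot strictly enclosed by the corner (d,e)
   additionally collects the weight passing through that corner. *)
lemma subwt_incl_excl:
  assumes de: "d < e"
  shows "int (subwt B d e x y) = int (subwt B d (e - 1) x y) + int (subwt B (d + 1) e x y)
     - int (subwt B (d + 1) (e - 1) x y)
     + (if (d, e) \<in> B \<inter> tri d e \<and> d < x \<and> y < e then int (subwt B (d + 1) (e - 1) x y) else 0)"
proof (induction x arbitrary: y rule: less_induct)
  case (less x)
  define A where "A = {p \<in> B. fst p < x \<and> y < snd p \<and> fst p + 2 \<le> snd p}"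
  define corner where "corner = ((d, e) \<in> B \<inter> tri d e)"
  let ?w = "\<lambda>d' e' p. int (subwt B d' e' (fst p) (snd p))"
  let ?S = "\<lambda>d' e'. \<Sum>p \<in> A \<inter> box d' e'. ?w d' e' p * 1"
  have unfold: "int (subwt B d' e' x y) = 1 + ?S d' e'" for d' e'
  proof -
    have "{p \<in> B \<inter> tri d' e'. fst p < x \<and> snd p > y} = A \<inter> box d' e'"
      unfolding A_def tri_def box_def by auto
    then show ?thesis by (subst subwt.simps) simp
  qed
  have "?S d e = ?S d (e - 1) + ?S (d + 1) e - ?S (d + 1) (e - 1)
      + (if corner then ?S (d + 1) (e - 1) else 0) + (if (d, e) \<in> A then 1 else 0)"
  proof (rule sum_weights_recursion[OF de])
    fix p assume "p \<in> A \<inter> box d e"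
    then have "fst p < x" unfolding A_def by auto
    then show "?w d e p = ?w d (e - 1) p + ?w (d + 1) e p - ?w (d + 1) (e - 1) p
        + (if corner \<and> d < fst p \<and> snd p < e then ?w (d + 1) (e - 1) p else 0)"
      using less.IH[of "fst p" "snd p"] unfolding corner_def by simp
  qed (fact subwt_boundary | force simp: A_def)+
  moreover have "(d, e) \<in> A \<longleftrightarrow> corner \<and> d < x \<and> y < e"
    unfolding A_def corner_def tri_def by auto
  moreover have "\<not> (d < x \<and> y < e) \<Longrightarrow> A \<inter> box (d + 1) (e - 1) = {}"
    unfolding A_def box_def by auto
  ultimately show ?case
    unfolding unfold corner_def[symmetric] by auto
qed

lemma wt_subwt: "wt e B x y = subwt B 2 (e - 1) x y"
proof (induction x arbitrary: y rule: less_induct)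
  case (less x)
  then show ?case
    by (subst wt.simps, subst subwt.simps) (auto intro!: sum.cong simp: tri_def)
qed

(* The exponent vector of the monomial z_d z_e attached to a dot (d,e). *)
definition dotmon :: "nat \<times> nat \<Rightarrow> nat \<Rightarrow> int" where
  "dotmon D j = zpow (fst D) 1 j + zpow (snd D) 1 j"

(* The black dots of all extended sub-triangles at once: the black dots off the base line
   together with every base-line dot (x,x+1). *)
definition ext_dots :: "(nat \<times> nat) set \<Rightarrow> (nat \<times> nat) set" where
  "ext_dots B = {p \<in> B. fst p + 2 \<le> snd p} \<union> {(x, x + 1) | x. True}"

(* Diagonal dots (i,i); such a dot carries the monomial z_i^{a_i}. *)
definition diag :: "(nat \<times> nat) set" where
  "diag = {(i, i) | i. True}"

definition wsum :: "(nat \<times> nat) set \<Rightarrow> nat \<Rightarrow> nat \<Rightarrow> (nat \<times> nat) set \<Rightarrow>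
    (nat \<times> nat \<Rightarrow> int) \<Rightarrow> int" where
  "wsum B d e A c = (\<Sum>D \<in> A \<inter> box d e. int (subwt B d e (fst D) (snd D)) * c D)"

lemma wsum_incl_excl:
  assumes de: "d < e" and ordered: "\<And>a b. (a, b) \<in> A \<Longrightarrow> a \<le> b"
  shows "wsum B d e A c = wsum B d (e - 1) A c + wsum B (d + 1) e A c - wsum B (d + 1) (e - 1) A c
      + (if (d, e) \<in> B \<inter> tri d e then wsum B (d + 1) (e - 1) A c else 0)
      + (if (d, e) \<in> A then c (d, e) else 0)"
  unfolding wsum_def
  by (rule sum_weights_recursion[OF de])
    (fact ordered | rule subwt_incl_excl[OF de] | fact subwt_boundary)+

(* The claimed exponent of z_j in p_{d,e}. *)
definition closed_form :: "(nat \<times> nat) set \<Rightarrow> (nat \<Rightarrow> int) \<Rightarrow> nat \<Rightarrow> nat \<Rightarrow> nat \<Rightarrow> int" where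
  "closed_form B a d e j =
     wsum B d e diag (\<lambda>D. zpow (fst D) (a (fst D)) j) - wsum B d e (ext_dots B) (\<lambda>D. dotmon D j)"

lemma closed_form_point: "closed_form B a e e j = zpow e (a e) j"
proof -
  have "diag \<inter> box e e = {(e, e)}" and "ext_dots B \<inter> box e e = {}"
    unfolding diag_def ext_dots_def box_def by auto
  then show ?thesis unfolding closed_form_def wsum_def by (simp add: subwt_trivial)
qed

(* The empty sub-triangle below a base-line dot contributes nothing. *)
lemma closed_form_empty: "closed_form B a (d + 1) d j = 0"
proof -
  have "diag \<inter> box (d + 1) d = {}" and "ext_dots B \<inter> box (d + 1) d = {}"
    unfolding diag_def ext_dots_def box_def by auto
  then show ?thesis unfolding closed_form_def wsum_def by simp
qed

lemma closed_form_recursion: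
  assumes de: "d < e"
  shows "closed_form B a d e j = closed_form B a d (e - 1) j + closed_form B a (d + 1) e j
      - closed_form B a (d + 1) (e - 1) j
      + (if (d, e) \<in> B \<inter> tri d e then closed_form B a (d + 1) (e - 1) j else 0)
      - (if (d, e) \<in> ext_dots B then dotmon (d, e) j else 0)"
proof -
  let ?c = "\<lambda>D. zpow (fst D) (a (fst D)) j" and ?m = "\<lambda>D. dotmon D j"
  have "wsum B d e diag ?c = wsum B d (e - 1) diag ?c + wsum B (d + 1) e diag ?c
      - wsum B (d + 1) (e - 1) diag ?c
      + (if (d, e) \<in> B \<inter> tri d e then wsum B (d + 1) (e - 1) diag ?c else 0)"
    using wsum_incl_excl[OF de, of diag B ?c] de unfolding diag_def by auto
  moreover have "wsum B d e (ext_dots B) ?m = wsum B d (e - 1) (ext_dots B) ?m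
      + wsum B (d + 1) e (ext_dots B) ?m - wsum B (d + 1) (e - 1) (ext_dots B) ?m
      + (if (d, e) \<in> B \<inter> tri d e then wsum B (d + 1) (e - 1) (ext_dots B) ?m else 0)
      + (if (d, e) \<in> ext_dots B then dotmon (d, e) j else 0)"
    by (rule wsum_incl_excl[OF de]) (auto simp: ext_dots_def)
  ultimately show ?thesis unfolding closed_form_def by simp
qed

lemma pm_closed_form: "d \<le> e \<Longrightarrow> pm E B a d e j = closed_form B a d e j"
proof (induction "e - d" arbitrary: d e rule: less_induct)
  case less
  show ?case
  proof (cases "d = e")
    case True
    then show ?thesis by (subst pm.simps) (simp add: closed_form_point)
  next
    case False
    then have de: "d < e" using less.prems by simp
    have IH1: "pm E B a d (e - 1) j = closed_form B a d (e - 1) j"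
      and IH2: "pm E B a (d + 1) e j = closed_form B a (d + 1) e j"
      using less.hyps de by auto
    have black: "(d, e) \<in> ext_dots B \<longleftrightarrow> (d, e) \<in> ext_black E B \<or> e = d + 1"
      using de unfolding ext_dots_def ext_black_def by auto
    have inner_black: "(d, e) \<in> B \<inter> tri d e \<longleftrightarrow> (d, e) \<in> ext_dots B \<and> e \<noteq> d + 1"
      using de unfolding ext_dots_def tri_def by auto
    show ?thesis
    proof (cases "(d, e) \<in> ext_dots B")
      case True
      then have "pm E B a d e j = pm E B a d (e - 1) j + pm E B a (d + 1) e j - dotmon (d, e) j"
        using de black by (subst pm.simps) (simp add: dotmon_def)
      moreover have "e = d + 1 \<Longrightarrow> closed_form B a (d + 1) (e - 1) j = 0"
        using closed_form_empty by simp
      ultimately show ?thesis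
        using closed_form_recursion[OF de] True inner_black IH1 IH2 by auto
    next
      case False
      then have "pm E B a d e j = pm E B a d (e - 1) j + pm E B a (d + 1) e j
          - pm E B a (d + 1) (e - 1) j"
        using de black by (subst pm.simps) simp
      moreover have "pm E B a (d + 1) (e - 1) j = closed_form B a (d + 1) (e - 1) j"
        using less.hyps de False black by auto
      ultimately show ?thesis
        using closed_form_recursion[OF de] False inner_black IH1 IH2 by auto
    qed
  qed
qed

lemma wsum_diag:
  "wsum B d e diag (\<lambda>D. zpow (fst D) (a (fst D)) j)
     = (if d \<le> j \<and> j \<le> e then a j * int (subwt B d e j j) else 0)"
proof -
  have fin: "finite (diag \<inter> box d e)" by (rule finite_ordered_box) (auto simp: diag_def)
  have "wsum B d e diag (\<lambda>D. zpow (fst D) (a (fst D)) j)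
      = (\<Sum>D \<in> diag \<inter> box d e. if D = (j, j) then a j * int (subwt B d e j j) else 0)"
    unfolding wsum_def by (rule sum.cong) (auto simp: diag_def zpow_def)
  also have "\<dots> = (if d \<le> j \<and> j \<le> e then a j * int (subwt B d e j j) else 0)"
    using fin by (simp add: diag_def box_def)
  finally show ?thesis .
qed

lemma sum_dotmon:
  assumes "finite A" and ordered: "\<And>x y. (x, y) \<in> A \<Longrightarrow> x < y"
  shows "(\<Sum>D \<in> A. w D * dotmon D j) = (\<Sum>D \<in> {p \<in> A. fst p = j \<or> snd p = j}. w D)"
proof -
  have "(\<Sum>D \<in> A. w D * dotmon D j) = (\<Sum>D \<in> A. if fst D = j \<or> snd D = j then w D else 0)"
  proof (rule sum.cong)
    fix D assume "D \<in> A"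
    then have "fst D < snd D" using ordered by (cases D) auto
    then show "w D * dotmon D j = (if fst D = j \<or> snd D = j then w D else 0)"
      by (auto simp: dotmon_def zpow_def)
  qed simp
  also have "\<dots> = (\<Sum>D \<in> {p \<in> A. fst p = j \<or> snd p = j}. w D)"
    by (rule sum.inter_filter[symmetric]) fact
  finally show ?thesis .
qed

definition enclosing :: "nat \<Rightarrow> (nat \<times> nat) set \<Rightarrow> nat \<Rightarrow> nat \<Rightarrow> (nat \<times> nat) set" where
  "enclosing e B x y = {p \<in> B \<inter> tri 2 (e - 1). fst p < x \<and> snd p > y}"

lemma finite_enclosing [simp]: "finite (enclosing e B x y)"
  unfolding enclosing_def by simp

lemma wt_enclosing: "wt e B x y = 1 + (\<Sum>p \<in> enclosing e B x y. wt e B (fst p) (snd p))"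
  unfolding enclosing_def by (subst wt.simps) simp

lemma alph_wt: "alph e B j = wt e B j j"
  unfolding alph_def by (subst wt_enclosing) (simp add: enclosing_def)

(* If (u,v) is the innermost dot enclosing (j,j), the dots (u,j) and (j,v) together carry
   the weight of (j,j): their enclosing dots are those of (j,j) except (u,v), and those
   enclosing both are the dots enclosing (u,v). *)
lemma wt_pair:
  assumes uv: "(u, v) \<in> enclosing e B j j"
    and inner: "\<And>q. q \<in> enclosing e B j j \<Longrightarrow> fst q \<le> u \<and> v \<le> snd q"
  shows "wt e B u j + wt e B j v = wt e B j j"
proof -
  let ?W = "\<lambda>p. wt e B (fst p) (snd p)"
  have uj: "u < j" "j < v" using uv unfolding enclosing_def by auto
  have union: "enclosing e B u j \<union> enclosing e B j v = enclosing e B j j - {(u, v)}"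
  proof
    show "enclosing e B u j \<union> enclosing e B j v \<subseteq> enclosing e B j j - {(u, v)}"
      using uj unfolding enclosing_def by auto
    show "enclosing e B j j - {(u, v)} \<subseteq> enclosing e B u j \<union> enclosing e B j v"
    proof
      fix q assume q: "q \<in> enclosing e B j j - {(u, v)}"
      then have "fst q < u \<or> v < snd q" using inner[of q] by (cases q) fastforce
      then show "q \<in> enclosing e B u j \<union> enclosing e B j v"
        using q inner[of q] uj unfolding enclosing_def by auto
    qed
  qed
  have inter: "enclosing e B u j \<inter> enclosing e B j v = enclosing e B u v"
    using uj unfolding enclosing_def by auto
  have "sum ?W (enclosing e B u j) + sum ?W (enclosing e B j v)
      = sum ?W (enclosing e B j j - {(u, v)}) + sum ?W (enclosing e B u v)"
    using sum.union_inter[of "enclosing e B u j" "enclosing e B j v" ?W] union inter by simp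
  moreover have "sum ?W (enclosing e B j j) = ?W (u, v) + sum ?W (enclosing e B j j - {(u, v)})"
    using sum.remove[OF finite_enclosing uv] .
  moreover note wt_enclosing[of e B u v] wt_enclosing[of e B u j] wt_enclosing[of e B j v]
    and wt_enclosing[of e B j j]
  ultimately show ?thesis by simp
qed

lemma ext_black_cases: "(x, y) \<in> ext_black e B \<Longrightarrow> (x, y) \<in> B \<or> y = x + 1"
  unfolding ext_black_def by auto

lemma base_black: "2 \<le> x \<Longrightarrow> x + 1 \<le> e - 1 \<Longrightarrow> (x, x + 1) \<in> ext_black e B"
  unfolding ext_black_def by auto

context
  fixes e :: nat and B :: "(nat \<times> nat) set"
  assumes sp: "sparse 2 (e - 1) B"
begin

lemma black_sub: "B \<subseteq> tri 2 (e - 1)"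
  using sp unfolding sparse_def by blast

lemma ext_black_range: "(x, y) \<in> ext_black e B \<Longrightarrow> 2 \<le> x \<and> x < y \<and> y \<le> e - 1"
  using black_sub unfolding ext_black_def tri_def by fastforce

lemma finite_ext_black: "finite (ext_black e B)"
proof (rule finite_subset)
  show "ext_black e B \<subseteq> {..e} \<times> {..e}" using ext_black_range by fastforce
qed simp

lemma card_le:
  assumes "2 \<le> x" "x < y" "y \<le> e - 1"
  shows "card (B \<inter> tri x y) \<le> y - x - 1"
proof (cases "y = x + 1")
  case False
  then have "(x, y) \<in> tri 2 (e - 1)" using assms unfolding tri_def by auto
  then show ?thesis using sp unfolding sparse_def by blast
qed (simp add: tri_short)

lemma card_black: "(x, y) \<in> ext_black e B \<Longrightarrow> card (B \<inter> tri x y) = y - x - 1"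
proof (cases "(x, y) \<in> B")
  case True
  then have "(x, y) \<in> tri 2 (e - 1)" using black_sub by auto
  then show ?thesis using sp True unfolding sparse_def by blast
next
  case False
  moreover assume "(x, y) \<in> ext_black e B"
  ultimately have "y = x + 1" using ext_black_cases by blast
  then show ?thesis by (simp add: tri_short)
qed

lemma black_if_full:
  assumes "2 \<le> x" "x < y" "y \<le> e - 1" and full: "y - x - 1 \<le> card (B \<inter> tri x y)"
  shows "(x, y) \<in> ext_black e B"
proof (cases "y = x + 1")
  case True
  then show ?thesis using assms base_black by simp
next
  case False
  then have xy: "(x, y) \<in> tri 2 (e - 1)" using assms unfolding tri_def by auto
  then have "card (B \<inter> tri x y) = y - x - 1" using full card_le assms by (simp add: le_antisym)
  then have "(x, y) \<in> B" using sp xy unfolding sparse_def by blast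
  then show ?thesis unfolding ext_black_def by simp
qed

(* Black dots of the extended triangle do not cross: otherwise the two sub-triangles below
   them would contain too many black dots below (a,d). *)
lemma noncross:
  assumes ab: "(a, b) \<in> ext_black e B" and cd: "(c, d) \<in> ext_black e B"
    and order: "a < c" "c < b" "b < d"
  shows False
proof -
  define X where "X = (B \<inter> tri a b) \<union> (B \<inter> tri c d)"
  have range: "2 \<le> a" "d \<le> e - 1" using ext_black_range[OF ab] ext_black_range[OF cd] by auto
  have X_sub: "insert (a, d) X \<subseteq> B \<inter> tri a d \<union> {(a, d)}" unfolding X_def tri_def using order by auto
  have a_d_new: "(a, d) \<notin> X" unfolding X_def tri_def using order by auto
  have "card X + card (B \<inter> tri c b) = card (B \<inter> tri a b) + card (B \<inter> tri c d)"
  proof -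
    have "(B \<inter> tri a b) \<inter> (B \<inter> tri c d) = B \<inter> tri c b" unfolding tri_def using order by auto
    then show ?thesis unfolding X_def using card_Un_Int[of "B \<inter> tri a b" "B \<inter> tri c d"] by simp
  qed
  moreover have "card (B \<inter> tri c b) \<le> b - c - 1" using card_le[of c b] range order by auto
  ultimately have X_big: "d - a - 1 \<le> card X" using card_black[OF ab] card_black[OF cd] order by linarith
  have "card X \<le> card (B \<inter> tri a d)"
    by (rule card_mono, simp) (use order in \<open>auto simp: X_def tri_def\<close>)
  then have "(a, d) \<in> ext_black e B" using black_if_full[of a d] range order X_big by linarith
  then have "(a, d) \<in> B" using ext_black_cases[of a d] order by auto
  then have "insert (a, d) X \<subseteq> B \<inter> tri a d" using X_sub range order unfolding tri_def by auto
  then have "card (insert (a, d) X) \<le> card (B \<inter> tri a d)" by (rule card_mono[rotated]) simp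
  moreover have "finite X" unfolding X_def by simp
  ultimately show False
    using a_d_new X_big card_le[of a d] range order by simp
qed

lemma apex_cover:
  assumes uv: "(u, v) \<in> B" and iv: "u < i" "(i, v) \<in> ext_black e B"
    and least: "\<And>k. u < k \<Longrightarrow> k < i \<Longrightarrow> (k, v) \<notin> ext_black e B"
  shows "B \<inter> tri u v \<subseteq> insert (u, v) (B \<inter> tri u i \<union> B \<inter> tri i v)"
proof
  fix p assume p: "p \<in> B \<inter> tri u v"
  obtain x y where xy: "p = (x, y)" by (cases p)
  have xyB: "(x, y) \<in> ext_black e B" using p xy unfolding ext_black_def by auto
  show "p \<in> insert (u, v) (B \<inter> tri u i \<union> B \<inter> tri i v)"
  proof (rule ccontr)
    assume "p \<notin> insert (u, v) (B \<inter> tri u i \<union> B \<inter> tri i v)"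
    then have straddle: "x < i" "i < y" and "p \<noteq> (u, v)" using p xy unfolding tri_def by auto
    show False
    proof (cases "y = v")
      case True
      then have "u < x" using \<open>p \<noteq> (u, v)\<close> p xy unfolding tri_def by auto
      then show False using least[of x] straddle xyB True by blast
    next
      case False
      then have "y < v" using p xy unfolding tri_def by auto
      then show False using noncross[OF xyB iv(2)] straddle by blast
    qed
  qed
qed

lemma apex:
  assumes uv: "(u, v) \<in> B"
  shows "\<exists>i. u < i \<and> i < v \<and> (u, i) \<in> ext_black e B \<and> (i, v) \<in> ext_black e B"
proof -
  have range: "2 \<le> u" "u + 2 \<le> v" "v \<le> e - 1" using uv black_sub unfolding tri_def by auto
  define P where "P = (\<lambda>i. u < i \<and> (i, v) \<in> ext_black e B)"
  have "P (v - 1)" unfolding P_def using base_black[of "v - 1"] range by auto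
  define i where "i = (LEAST i. P i)"
  have "P i" unfolding i_def by (rule LeastI) fact
  then have ui: "u < i" and ivB: "(i, v) \<in> ext_black e B" unfolding P_def by auto
  have iv: "i < v" using ext_black_range[OF ivB] by simp
  have "\<And>k. u < k \<Longrightarrow> k < i \<Longrightarrow> (k, v) \<notin> ext_black e B"
    using not_less_Least[of _ P] unfolding i_def P_def by blast
  then have cover: "B \<inter> tri u v \<subseteq> insert (u, v) (B \<inter> tri u i \<union> B \<inter> tri i v)"
    using apex_cover[OF uv ui ivB] by blast
  have "card (B \<inter> tri u v) \<le> Suc (card (B \<inter> tri u i \<union> B \<inter> tri i v))"
    using card_mono[OF _ cover] by (simp add: card_insert_if split: if_splits)
  also have "\<dots> \<le> Suc (card (B \<inter> tri u i) + card (B \<inter> tri i v))"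
    using card_Un_le by simp
  finally have "i - u - 1 \<le> card (B \<inter> tri u i)"
    using card_black[OF ivB] card_black[of u v] uv iv ui unfolding ext_black_def by auto
  then have "(u, i) \<in> ext_black e B" using black_if_full[of u i] range ui iv by simp
  then show ?thesis using ui iv ivB by blast
qed

(* If some black dot encloses (j,j), a narrowest one is contained in all others. *)
lemma innermost_exists:
  assumes "enclosing e B j j \<noteq> {}"
  shows "\<exists>u v. (u, v) \<in> enclosing e B j j \<and> (\<forall>q \<in> enclosing e B j j. fst q \<le> u \<and> v \<le> snd q)"
proof -
  let ?S = "enclosing e B j j"
  obtain p where pS: "p \<in> ?S" and narrow: "\<And>q. q \<in> ?S \<Longrightarrow> snd p - fst p \<le> snd q - fst q"
    using ex_has_least_nat[of "\<lambda>p. p \<in> ?S" _ "\<lambda>p. snd p - fst p"] assms by blast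
  obtain u v where p: "p = (u, v)" by (cases p)
  have uv: "(u, v) \<in> ext_black e B" "u < j" "j < v"
    using pS p unfolding enclosing_def ext_black_def by auto
  have "fst q \<le> u \<and> v \<le> snd q" if q: "q \<in> ?S" for q
  proof -
    obtain x y where xy: "q = (x, y)" by (cases q)
    have xy_black: "(x, y) \<in> ext_black e B" "x < j" "j < y"
      using q xy unfolding enclosing_def ext_black_def by auto
    have width: "v - u \<le> y - x" using narrow[OF q] p xy by simp
    have "x \<le> u"
    proof (rule ccontr)
      assume "\<not> x \<le> u"
      then show False using noncross[OF uv(1) xy_black(1)] width uv xy_black by (cases "v < y") auto
    qed
    moreover have "v \<le> y"
    proof (rule ccontr)
      assume "\<not> v \<le> y"
      then show False using noncross[OF xy_black(1) uv(1)] width uv xy_black by (cases "x < u") auto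
    qed
    ultimately show ?thesis using xy by simp
  qed
  then show ?thesis using pS p by blast
qed

lemma innermost_apex:
  assumes uv: "(u, v) \<in> enclosing e B j j"
    and inner: "\<And>q. q \<in> enclosing e B j j \<Longrightarrow> fst q \<le> u \<and> v \<le> snd q"
  shows "(u, j) \<in> ext_black e B \<and> (j, v) \<in> ext_black e B"
proof -
  have uvB: "(u, v) \<in> B" "u < j" "j < v" using uv unfolding enclosing_def by auto
  obtain i where i: "u < i" "i < v" "(u, i) \<in> ext_black e B" "(i, v) \<in> ext_black e B"
    using apex[OF uvB(1)] by blast
  have in_enclosing: "(x, y) \<in> enclosing e B j j" if "(x, y) \<in> B" "x < j" "j < y" for x y
    using that black_sub unfolding enclosing_def by auto
  have "i = j"
  proof (rule ccontr)
    assume "i \<noteq> j"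
    then consider "j < i" | "i < j" by linarith
    then show False
    proof cases
      case 1
      then have "(u, i) \<in> B" using ext_black_cases[OF i(3)] uvB by auto
      then show False using inner[OF in_enclosing] uvB 1 i by fastforce
    next
      case 2
      then have "(i, v) \<in> B" using ext_black_cases[OF i(4)] uvB by auto
      then show False using inner[OF in_enclosing] uvB 2 i by fastforce
    qed
  qed
  then show ?thesis using i by simp
qed

(* Every other black dot on the line l_j is enclosed by exactly the dots enclosing (j,j),
   hence has weight alpha_j. *)
lemma wt_line_other:
  assumes uv: "(u, v) \<in> enclosing e B j j"
    and inner: "\<And>q. q \<in> enclosing e B j j \<Longrightarrow> fst q \<le> u \<and> v \<le> snd q"
    and D: "(x, y) \<in> ext_black e B" "x = j \<or> y = j" "(x, y) \<noteq> (u, j)" "(x, y) \<noteq> (j, v)"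
  shows "wt e B x y = wt e B j j"
proof -
  have uvB: "(u, v) \<in> ext_black e B" "u < j" "j < v"
    using uv unfolding enclosing_def ext_black_def by auto
  have xy: "x < y" using ext_black_range[OF D(1)] by simp
  have "enclosing e B x y = enclosing e B j j"
  proof (cases "y = j")
    case True
    then have "u < x" using noncross[OF D(1) uvB(1)] uvB xy D(3) by fastforce
    then show ?thesis using True xy inner unfolding enclosing_def by fastforce
  next
    case False
    then have "x = j" using D(2) by simp
    then have "y < v" using noncross[OF uvB(1) D(1)] uvB xy D(4) by fastforce
    then show ?thesis using \<open>x = j\<close> xy inner unfolding enclosing_def by fastforce
  qed
  then show ?thesis using wt_enclosing[of e B x y] wt_enclosing[of e B j j] by simp
qed

lemma enclosing_line:
  assumes "(x, y) \<in> ext_black e B" "x = j \<or> y = j"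
  shows "enclosing e B x y \<subseteq> enclosing e B j j"
  using ext_black_range[OF assms(1)] assms(2) unfolding enclosing_def by auto

lemma line_sum_unstraddled:
  assumes none: "enclosing e B j j = {}"
  shows "(\<Sum>D \<in> {p \<in> ext_black e B. fst p = j \<or> snd p = j}. wt e B (fst D) (snd D))
      = kk e B j * alph e B j"
proof -
  have "wt e B (fst D) (snd D) = 1" if "D \<in> {p \<in> ext_black e B. fst p = j \<or> snd p = j}" for D
    using enclosing_line[of "fst D" "snd D"] that none wt_enclosing[of e B "fst D" "snd D"] by auto
  moreover have "alph e B j = 1" using none by (simp add: alph_wt wt_enclosing[of e B j j])
  ultimately show ?thesis unfolding kk_def nline_def by simp
qed

lemma line_sum_straddled:
  assumes some: "enclosing e B j j \<noteq> {}"
  shows "(\<Sum>D \<in> {p \<in> ext_black e B. fst p = j \<or> snd p = j}. wt e B (fst D) (snd D))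
      = kk e B j * alph e B j"
proof -
  define L where "L = {p \<in> ext_black e B. fst p = j \<or> snd p = j}"
  let ?W = "\<lambda>p. wt e B (fst p) (snd p)"
  obtain u v where uv: "(u, v) \<in> enclosing e B j j"
    and inner: "\<And>q. q \<in> enclosing e B j j \<Longrightarrow> fst q \<le> u \<and> v \<le> snd q"
    using innermost_exists[OF some] by blast
  have uj: "u < j" "j < v" using uv unfolding enclosing_def by auto
  define L' where "L' = L - {(u, j), (j, v)}"
  have "(u, j) \<in> L" "(j, v) \<in> L" using innermost_apex[OF uv inner] unfolding L_def by auto
  then have L_split: "L = insert (u, j) (insert (j, v) L')" and new: "(u, j) \<notin> insert (j, v) L'" "(j, v) \<notin> L'"
    using uj unfolding L'_def by auto
  have fin: "finite L'" unfolding L'_def L_def using finite_ext_black by simp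
  have "?W D = wt e B j j" if "D \<in> L'" for D
    using wt_line_other[OF uv inner, of "fst D" "snd D"] that unfolding L'_def L_def by auto
  then have "sum ?W L = wt e B j j + card L' * wt e B j j"
    unfolding L_split using fin new wt_pair[OF uv inner] by simp
  moreover have "card L = card L' + 2" unfolding L_split using fin new by simp
  moreover have "alph e B j \<noteq> 1"
  proof -
    obtain q where "q \<in> enclosing e B j j" using some by blast
    then have "?W q \<le> sum ?W (enclosing e B j j)" by (intro member_le_sum) simp_all
    moreover have "1 \<le> ?W q" by (subst wt_enclosing) simp
    moreover have "alph e B j = 1 + sum ?W (enclosing e B j j)"
      by (simp add: alph_wt wt_enclosing[of e B j j])
    ultimately show ?thesis by linarith
  qed
  ultimately show ?thesis unfolding kk_def nline_def L_def[symmetric] by (simp add: alph_wt)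
qed

lemma line_sum:
  "(\<Sum>D \<in> {p \<in> ext_black e B. fst p = j \<or> snd p = j}. wt e B (fst D) (snd D))
      = kk e B j * alph e B j"
  using line_sum_unstraddled line_sum_straddled by blast

lemma ext_black_top: "ext_dots B \<inter> box 2 (e - 1) = ext_black e B"
  using black_sub unfolding ext_dots_def ext_black_def box_def tri_def by auto

lemma closed_form_top:
  "closed_form B a 2 (e - 1) j =
     (if 2 \<le> j \<and> j \<le> e - 1 then (a j - int (kk e B j)) * int (alph e B j) else 0)"
proof -
  let ?line = "{p \<in> ext_black e B. fst p = j \<or> snd p = j}"
  have diag_part: "wsum B 2 (e - 1) diag (\<lambda>D. zpow (fst D) (a (fst D)) j)
      = (if 2 \<le> j \<and> j \<le> e - 1 then a j * int (alph e B j) else 0)"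
    by (simp add: wsum_diag alph_wt wt_subwt)
  have "wsum B 2 (e - 1) (ext_dots B) (\<lambda>D. dotmon D j)
      = (\<Sum>D \<in> ?line. int (wt e B (fst D) (snd D)))"
    unfolding wsum_def ext_black_top wt_subwt
    by (rule sum_dotmon) (use finite_ext_black ext_black_range in auto)
  also have "\<dots> = int (kk e B j * alph e B j)"
    by (simp only: of_nat_sum[symmetric] line_sum)
  finally have dots_part: "wsum B 2 (e - 1) (ext_dots B) (\<lambda>D. dotmon D j)
      = int (kk e B j * alph e B j)" .
  have "kk e B j * alph e B j = 0" if out: "\<not> (2 \<le> j \<and> j \<le> e - 1)"
  proof -
    have empty: "?line = {}" using out ext_black_range by fastforce
    have "kk e B j * alph e B j = (\<Sum>D \<in> ?line. wt e B (fst D) (snd D))"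
      by (rule line_sum[symmetric])
    also have "\<dots> = 0" by (simp only: empty sum.empty)
    finally show ?thesis .
  qed
  then show ?thesis unfolding closed_form_def diag_part dots_part by (auto simp: algebra_simps)
qed

end

theorem mainTheorem4:
  fixes e :: nat and a :: "nat \<Rightarrow> int" and B :: "(nat \<times> nat) set"
  assumes "4 \<le> e"
    and "sparse 2 (e - 1) B"
  shows "pm e B a 2 (e - 1) =
    (\<lambda>\<beta>. if 2 \<le> \<beta> \<and> \<beta> \<le> e - 1
          then (a \<beta> - int (kk e B \<beta>)) * int (alph e B \<beta>) else 0)"
proof
  fix j
  have "pm e B a 2 (e - 1) j = closed_form B a 2 (e - 1) j"
    using assms(1) by (intro pm_closed_form) simp
  also have "\<dots> = (if 2 \<le> j \<and> j \<le> e - 1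
      then (a j - int (kk e B j)) * int (alph e B j) else 0)"
    by (rule closed_form_top[OF assms(2)])
  finally show "pm e B a 2 (e - 1) j = (if 2 \<le> j \<and> j \<le> e - 1
      then (a j - int (kk e B j)) * int (alph e B j) else 0)" .
qed

end
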